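(* Let $\Phi_1,\dots,\Phi_N:\mathcal L(\mathbb C^d)\to\mathcal L(\mathbb C^d)$ be quantum channels and $\mathbf e^{(1)},\dots,\mathbf e^{(N)}$ orthonormal bases of $\mathbb C^d$ such that for all $i\ne j$ in $[N]$, $\langle G_{\Phi_i,\mathbf e^{(i)}}-\omega,\ G_{\Phi_j,\mathbf e^{(j)}}-\omega\rangle=0$ (Hilbert–Schmidt inner product). Then $$\min\Big\{\operatorname{Tr}H:\ H \text{ Hermitian},\ H\ge G_{\Phi_i,\mathbf e^{(i)}}\ \forall i\in[N]\Big\}=1-N+\sum_{i=1}^N\operatorname{Tr}G_{\Phi_i,\mathbf e^{(i)}}.$$
   Context: For $X=\sum_{i,j}X_{ij}|i\rangle\langle j|$, $|X\rangle:=\sum_{i,j}X_{ij}|i\rangle\otimes|j\rangle$. For a channel $\Phi$ with Hilbert–Schmidt adjoint $\Phi^*$ and an orthonormal basis $\mathbf e=(e_i)$, $G_{\Phi,\mathbf e}:=\sum_{i=1}^d |\Phi^*(|e_i\rangle\langle e_i|)\rangle\langle\Phi^*(|e_i\rangle\langle e_i|)|/\operatorname{Tr}\Phi^*(|e_i\rangle\langle e_i|)$ (terms with zero denominator omitted). $\omega:=\frac1d\sum_{i,j=1}^d|ii\rangle\langle jj|$ is the maximally entangled state. *)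

theory Defs
  imports "Jordan_Normal_Form.Matrix"
begin

text \<open>Matrices are Jordan_Normal_Form complex matrices. A vector/matrix on
  C^d (x) C^d is indexed by i*d + j for the basis vector |i> (x) |j>.\<close>

definition mtrace :: "complex mat \<Rightarrow> complex" where
  "mtrace A = (\<Sum>i<dim_row A. A $$ (i, i))"

definition mat_adj :: "complex mat \<Rightarrow> complex mat" where
  "mat_adj A = mat (dim_col A) (dim_row A) (\<lambda>(i, j). cnj (A $$ (j, i)))"

definition hs_inner :: "complex mat \<Rightarrow> complex mat \<Rightarrow> complex" where
  "hs_inner A B = mtrace (mat_adj A * B)"

definition cinner :: "complex vec \<Rightarrow> complex vec \<Rightarrow> complex" where
  "cinner v w = (\<Sum>i<dim_vec v. cnj (v $ i) * w $ i)"

definition hermitian_mat :: "nat \<Rightarrow> complex mat \<Rightarrow> bool" where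
  "hermitian_mat n A \<longleftrightarrow> A \<in> carrier_mat n n \<and> mat_adj A = A"

definition psd_mat :: "nat \<Rightarrow> complex mat \<Rightarrow> bool" where
  "psd_mat n A \<longleftrightarrow> A \<in> carrier_mat n n \<and>
     (\<forall>v \<in> carrier_vec n. cinner v (A *\<^sub>v v) \<in> \<real> \<and> 0 \<le> Re (cinner v (A *\<^sub>v v)))"

definition loewner_le :: "nat \<Rightarrow> complex mat \<Rightarrow> complex mat \<Rightarrow> bool" where
  "loewner_le n A B \<longleftrightarrow> A \<in> carrier_mat n n \<and> B \<in> carrier_mat n n \<and> psd_mat n (B - A)"

text \<open>Phi (x) id_n acting on (C^d (x) C^n)-matrices, index i*n + k for |i> (x) |k>.\<close>
definition ampl :: "nat \<Rightarrow> nat \<Rightarrow> (complex mat \<Rightarrow> complex mat) \<Rightarrow> complex mat \<Rightarrow> complex mat" where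
  "ampl d n \<Phi> X = mat (d * n) (d * n) (\<lambda>(a, b).
      \<Phi> (mat d d (\<lambda>(i, j). X $$ (i * n + a mod n, j * n + b mod n))) $$ (a div n, b div n))"

definition quantum_channel :: "nat \<Rightarrow> (complex mat \<Rightarrow> complex mat) \<Rightarrow> bool" where
  "quantum_channel d \<Phi> \<longleftrightarrow>
     (\<forall>A \<in> carrier_mat d d. \<Phi> A \<in> carrier_mat d d) \<and>
     (\<forall>A \<in> carrier_mat d d. \<forall>B \<in> carrier_mat d d. \<Phi> (A + B) = \<Phi> A + \<Phi> B) \<and>
     (\<forall>A \<in> carrier_mat d d. \<forall>c. \<Phi> (c \<cdot>\<^sub>m A) = c \<cdot>\<^sub>m \<Phi> A) \<and>
     (\<forall>n. \<forall>X. psd_mat (d * n) X \<longrightarrow> psd_mat (d * n) (ampl d n \<Phi> X)) \<and>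
     (\<forall>A \<in> carrier_mat d d. mtrace (\<Phi> A) = mtrace A)"

definition onb :: "nat \<Rightarrow> (nat \<Rightarrow> complex vec) \<Rightarrow> bool" where
  "onb d e \<longleftrightarrow> (\<forall>k<d. e k \<in> carrier_vec d) \<and>
     (\<forall>k<d. \<forall>l<d. cinner (e k) (e l) = (if k = l then 1 else 0))"

definition unit_mat_ij :: "nat \<Rightarrow> nat \<Rightarrow> nat \<Rightarrow> complex mat" where
  "unit_mat_ij d i j = mat d d (\<lambda>(a, b). if a = i \<and> b = j then 1 else 0)"

text \<open>Hilbert-Schmidt adjoint: the unique map with <Phi^*(A), B> = <A, Phi(B)>;
  its (i,j) entry is conj <A, Phi(|i><j|)>.\<close>
definition chan_adj :: "nat \<Rightarrow> (complex mat \<Rightarrow> complex mat) \<Rightarrow> complex mat \<Rightarrow> complex mat" where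
  "chan_adj d \<Phi> A = mat d d (\<lambda>(i, j). cnj (hs_inner A (\<Phi> (unit_mat_ij d i j))))"

definition ketbra :: "complex vec \<Rightarrow> complex mat" where
  "ketbra v = mat (dim_vec v) (dim_vec v) (\<lambda>(a, b). v $ a * cnj (v $ b))"

definition vecX :: "nat \<Rightarrow> complex mat \<Rightarrow> complex vec" where
  "vecX d X = vec (d * d) (\<lambda>k. X $$ (k div d, k mod d))"

definition Gmat :: "nat \<Rightarrow> (complex mat \<Rightarrow> complex mat) \<Rightarrow> (nat \<Rightarrow> complex vec) \<Rightarrow> complex mat" where
  "Gmat d \<Phi> e = mat (d * d) (d * d) (\<lambda>(a, b).
     \<Sum>i<d. (let P = chan_adj d \<Phi> (ketbra (e i)) in
              if mtrace P = 0 then 0 else ketbra (vecX d P) $$ (a, b) / mtrace P))"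

definition omega :: "nat \<Rightarrow> complex mat" where
  "omega d = mat (d * d) (d * d) (\<lambda>(a, b).
     if a div d = a mod d \<and> b div d = b mod d then 1 / of_nat d else 0)"

end

(* The effects P_k = Phi^*(|e_k><e_k|) sum to the identity, and G = sum_k |a_k><a_k| with
   a_k = |P_k> / sqrt (tr P_k).  Splitting each a_k along the unit vector u = |I> / sqrt d gives
   G = omega + A with A = sum_k |w_k><w_k| and every w_k orthogonal to u; Hilbert-Schmidt
   orthogonality of the A_i = G_i - omega then makes all the w's of different channels orthogonal.
   Hence H = omega + sum_i A_i dominates every G_i and has the stated trace.  Conversely, if
   H >= G_i for all i, summing <f, H f> over an orthonormal basis of the span of u and of all
   the w's gives at most tr H (Bessel) and at least 1 + sum_i tr A_i (Parseval). *)
theory Submission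
  imports Defs "Jordan_Normal_Form.Determinant"
begin

section \<open>Inner products and quadratic forms\<close>

lemma cinner_commute: "dim_vec x = dim_vec y \<Longrightarrow> cinner y x = cnj (cinner x y)"
  by (simp add: cinner_def mult.commute cnj_sum)

lemma cnj_mult_self: "cnj z * z = of_real ((cmod z)\<^sup>2)"
  using complex_norm_square[of z] by (simp add: mult.commute)

lemma cinner_self: "cinner x x = of_real (\<Sum>a<dim_vec x. (cmod (x $ a))\<^sup>2)"
  unfolding cinner_def of_real_sum by (simp only: cnj_mult_self)

lemma cinner_self_real: "cinner x x = of_real (Re (cinner x x))"
  by (subst (1 2) cinner_self) simp

lemma cinner_self_nonneg: "0 \<le> Re (cinner x x)"
  by (subst cinner_self) (simp add: sum_nonneg)

lemma cinner_self_eq_0D: "cinner x x = 0 \<Longrightarrow> x = 0\<^sub>v (dim_vec x)"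
  by (intro eq_vecI) (auto simp: cinner_self sum_nonneg_eq_0_iff simp del: of_real_sum)

lemma cinner_add_right:
  "dim_vec u = dim_vec x \<Longrightarrow> dim_vec v = dim_vec x \<Longrightarrow> cinner x (u + v) = cinner x u + cinner x v"
  by (simp add: cinner_def distrib_left sum.distrib)

lemma cinner_diff_right:
  "dim_vec u = dim_vec x \<Longrightarrow> dim_vec v = dim_vec x \<Longrightarrow> cinner x (u - v) = cinner x u - cinner x v"
  by (simp add: cinner_def right_diff_distrib sum_subtractf)

lemma cinner_diff_left:
  "dim_vec x = dim_vec z \<Longrightarrow> dim_vec y = dim_vec z \<Longrightarrow> cinner (x - y) z = cinner x z - cinner y z"
  by (simp add: cinner_def left_diff_distrib sum_subtractf)

lemma cinner_smult_left: "cinner (c \<cdot>\<^sub>v x) y = cnj c * cinner x y"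
  by (simp add: cinner_def sum_distrib_left mult.assoc)

lemma cinner_smult_right: "dim_vec y = dim_vec x \<Longrightarrow> cinner x (c \<cdot>\<^sub>v y) = c * cinner x y"
  by (simp add: cinner_def sum_distrib_left mult_ac)

lemma sum_swap3:
  "(\<Sum>a\<in>A. \<Sum>b\<in>B. \<Sum>c\<in>C. f a b c) = (\<Sum>b\<in>B. \<Sum>c\<in>C. \<Sum>a\<in>A. f a b c)"
  by (simp only: sum.swap[of _ A])

lemma quad_form_expand:
  assumes "A \<in> carrier_mat n n" "dim_vec x = n"
  shows "cinner x (A *\<^sub>v x) = (\<Sum>a<n. \<Sum>b<n. cnj (x $ a) * A $$ (a, b) * x $ b)"
  using assms by (simp add: cinner_def scalar_prod_def atLeast0LessThan sum_distrib_left mult.assoc)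

lemma quad_form_add:
  assumes "A \<in> carrier_mat n n" "B \<in> carrier_mat n n" "dim_vec x = n"
  shows "cinner x ((A + B) *\<^sub>v x) = cinner x (A *\<^sub>v x) + cinner x (B *\<^sub>v x)"
  using assms by (subst add_mult_distrib_mat_vec[of _ n n]) (auto intro: cinner_add_right)

lemma quad_form_diff:
  assumes "A \<in> carrier_mat n n" "B \<in> carrier_mat n n" "dim_vec x = n"
  shows "cinner x ((A - B) *\<^sub>v x) = cinner x (A *\<^sub>v x) - cinner x (B *\<^sub>v x)"
  using assms by (subst minus_mult_distrib_mat_vec[of _ n n]) (auto intro: cinner_diff_right)

lemma quad_form_two_point:
  assumes "A \<in> carrier_mat n n" "j < n" "l < n" "j \<noteq> l"
    and x: "x = vec n (\<lambda>a. if a = j then 1 else if a = l then \<alpha> else 0)"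
  shows "cinner x (A *\<^sub>v x)
    = A $$ (j, j) + \<alpha> * A $$ (j, l) + cnj \<alpha> * A $$ (l, j) + cnj \<alpha> * \<alpha> * A $$ (l, l)"
proof -
  have "vec n (\<lambda>a. if a = j then 1 else if a = l then \<alpha> else 0)
      = vec n (\<lambda>a. (if a = j then 1 else 0) + (if a = l then \<alpha> else 0))"
    using assms(4) by auto
  then show ?thesis
    using assms
    by (simp add: quad_form_expand distrib_left distrib_right sum.distrib if_distrib[of cnj]
        if_distrib[of "\<lambda>x. x * _"] if_distrib[of "\<lambda>x. _ * x"] sum.delta cong: if_cong)
qed

lemma quad_form_sum:
  assumes "dim_vec x = n" "finite S" "\<And>s. s \<in> S \<Longrightarrow> F s \<in> carrier_mat n n"
  shows "cinner x (mat n n (\<lambda>ij. \<Sum>s\<in>S. c s * F s $$ ij) *\<^sub>v x) = (\<Sum>s\<in>S. c s * cinner x (F s *\<^sub>v x))"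
proof -
  have "cinner x (mat n n (\<lambda>ij. \<Sum>s\<in>S. c s * F s $$ ij) *\<^sub>v x)
      = (\<Sum>a<n. \<Sum>b<n. \<Sum>s\<in>S. c s * (cnj (x $ a) * F s $$ (a, b) * x $ b))"
    by (subst quad_form_expand[OF mat_carrier assms(1)])
      (simp add: sum_distrib_left sum_distrib_right mult_ac)
  also have "\<dots> = (\<Sum>s\<in>S. c s * cinner x (F s *\<^sub>v x))"
    using assms by (subst sum_swap3[symmetric], intro sum.cong refl)
      (simp add: quad_form_expand[OF _ assms(1)] sum_distrib_left)
  finally show ?thesis .
qed

lemma mat_adj_add:
  "A \<in> carrier_mat n m \<Longrightarrow> B \<in> carrier_mat n m \<Longrightarrow> mat_adj (A + B) = mat_adj A + mat_adj B"
  by (intro eq_matI) (auto simp: mat_adj_def)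

lemma mtrace_add: "A \<in> carrier_mat n n \<Longrightarrow> B \<in> carrier_mat n n \<Longrightarrow> mtrace (A + B) = mtrace A + mtrace B"
  by (simp add: mtrace_def sum.distrib)

section \<open>Positive semidefinite matrices\<close>

lemma psd_matD:
  "psd_mat n A \<Longrightarrow> dim_vec v = n \<Longrightarrow> cinner v (A *\<^sub>v v) \<in> \<real> \<and> 0 \<le> Re (cinner v (A *\<^sub>v v))"
  by (auto simp: psd_mat_def)

lemma psd_mat_carrier: "psd_mat n A \<Longrightarrow> A \<in> carrier_mat n n"
  by (simp add: psd_mat_def)

lemma psd_mat_add: "psd_mat n A \<Longrightarrow> psd_mat n B \<Longrightarrow> psd_mat n (A + B)"
  unfolding psd_mat_def by (auto simp: quad_form_add)

lemma quad_form_mono: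
  assumes "psd_mat n (H - G)" "H \<in> carrier_mat n n" "G \<in> carrier_mat n n" "dim_vec v = n"
  shows "Re (cinner v (G *\<^sub>v v)) \<le> Re (cinner v (H *\<^sub>v v))"
  using psd_matD[OF assms(1,4)] quad_form_diff[OF assms(2-4)] by simp

lemma loewner_le_add_psdD:
  assumes "loewner_le n (A + B) H" "psd_mat n A" "psd_mat n B"
  shows "psd_mat n H" "psd_mat n (H - A)" "psd_mat n (H - B)"
proof -
  have c: "H \<in> carrier_mat n n" "A \<in> carrier_mat n n" "B \<in> carrier_mat n n"
    and HAB: "psd_mat n (H - (A + B))"
    using assms by (simp_all add: loewner_le_def psd_mat_carrier)
  have "H = (H - (A + B)) + (A + B)" "H - A = (H - (A + B)) + B" "H - B = (H - (A + B)) + A"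
    using c by (auto intro!: eq_matI)
  then show "psd_mat n H" "psd_mat n (H - A)" "psd_mat n (H - B)"
    using HAB assms(2,3) by (metis psd_mat_add)+
qed

lemma psd_mat_diag:
  assumes "psd_mat n A" "j < n"
  shows "A $$ (j, j) \<in> \<real>" "0 \<le> Re (A $$ (j, j))"
proof -
  have "cinner (unit_vec n j) (A *\<^sub>v unit_vec n j) = A $$ (j, j)"
    using assms psd_mat_carrier[OF assms(1)]
    by (simp add: quad_form_expand unit_vec_def if_distrib[of cnj] if_distrib[of "\<lambda>x. x * _"]
      if_distrib[of "\<lambda>x. _ * x"] sum.If_cases cong: if_cong)
  then show "A $$ (j, j) \<in> \<real>" "0 \<le> Re (A $$ (j, j))"
    using psd_matD[OF assms(1), of "unit_vec n j"] by auto
qed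

lemma psd_mat_trace:
  assumes "psd_mat n A"
  shows "mtrace A = of_real (Re (mtrace A))" "0 \<le> Re (mtrace A)"
proof -
  have "dim_row A = n" using psd_mat_carrier[OF assms] by simp
  then have tr: "mtrace A = (\<Sum>j<n. A $$ (j, j))" by (simp add: mtrace_def)
  show "mtrace A = of_real (Re (mtrace A))"
    using psd_mat_diag(1)[OF assms] by (simp add: tr complex_eq_iff Im_sum complex_is_Real_iff)
  show "0 \<le> Re (mtrace A)"
    using psd_mat_diag(2)[OF assms] by (auto simp: tr intro: sum_nonneg)
qed

text \<open>An off-diagonal entry is killed by the form on \<open>e\<^sub>j + \<alpha> e\<^sub>l\<close>: with zero
  diagonal it is odd in \<open>\<alpha>\<close> and nonnegative, hence zero.\<close>
lemma psd_mat_trace_eq_0: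
  assumes "psd_mat n A" "mtrace A = 0"
  shows "A = 0\<^sub>m n n"
proof -
  have A: "A \<in> carrier_mat n n" using psd_mat_carrier[OF assms(1)] .
  have "(\<Sum>j<n. Re (A $$ (j, j))) = 0"
    using assms(2) A by (simp add: mtrace_def Re_sum[symmetric])
  then have diag: "A $$ (j, j) = 0" if "j < n" for j
    using that psd_mat_diag[OF assms(1)]
    by (subst (asm) sum_nonneg_eq_0_iff) (auto simp: complex_is_Real_iff complex_eq_iff)
  have off: "A $$ (j, l) = 0" if jl: "j < n" "l < n" "j \<noteq> l" for j l
  proof -
    define q where "q \<alpha> = \<alpha> * A $$ (j, l) + cnj \<alpha> * A $$ (l, j)" for \<alpha>
    have q_psd: "q \<alpha> \<in> \<real> \<and> 0 \<le> Re (q \<alpha>)" for \<alpha>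
      using psd_matD[OF assms(1), of "vec n (\<lambda>a. if a = j then 1 else if a = l then \<alpha> else 0)"]
      by (simp add: quad_form_two_point[OF A jl refl] diag jl q_def)
    have "q \<alpha> = 0" for \<alpha>
      using q_psd[of \<alpha>] q_psd[of "- \<alpha>"] by (simp add: q_def complex_is_Real_iff complex_eq_iff)
    from this[of 1] this[of \<i>] show ?thesis by (simp add: q_def complex_eq_iff)
  qed
  show ?thesis using A diag off by (intro eq_matI) auto
qed

section \<open>Sums of rank-one matrices\<close>

definition ketbra_sum :: "nat \<Rightarrow> 'k set \<Rightarrow> ('k \<Rightarrow> complex vec) \<Rightarrow> complex mat" where
  "ketbra_sum n K w = mat n n (\<lambda>(a, b). \<Sum>k\<in>K. w k $ a * cnj (w k $ b))"

lemma ketbra_sum_carrier [simp]: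
  "ketbra_sum n K w \<in> carrier_mat n n"
  "dim_row (ketbra_sum n K w) = n" "dim_col (ketbra_sum n K w) = n"
  by (auto simp: ketbra_sum_def)

lemma ketbra_sum_index [simp]:
  "a < n \<Longrightarrow> b < n \<Longrightarrow> ketbra_sum n K w $$ (a, b) = (\<Sum>k\<in>K. w k $ a * cnj (w k $ b))"
  by (simp add: ketbra_sum_def)

lemma ketbra_sum_quad_form:
  assumes "\<And>k. k \<in> K \<Longrightarrow> dim_vec (w k) = n" "dim_vec x = n"
  shows "cinner x (ketbra_sum n K w *\<^sub>v x) = of_real (\<Sum>k\<in>K. (cmod (cinner (w k) x))\<^sup>2)"
proof -
  have "cinner x (ketbra_sum n K w *\<^sub>v x)
      = (\<Sum>a<n. \<Sum>b<n. \<Sum>k\<in>K. (cnj (x $ a) * w k $ a) * (cnj (w k $ b) * x $ b))"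
    by (subst quad_form_expand[OF ketbra_sum_carrier(1) assms(2)])
      (simp add: sum_distrib_left sum_distrib_right mult_ac)
  also have "\<dots> = (\<Sum>k\<in>K. (\<Sum>a<n. cnj (x $ a) * w k $ a) * (\<Sum>b<n. cnj (w k $ b) * x $ b))"
    by (simp only: sum_product sum.swap[of _ "{..<n}" K])
  also have "\<dots> = (\<Sum>k\<in>K. cnj (cinner (w k) x) * cinner (w k) x)"
    using assms by (intro sum.cong refl) (simp add: cinner_def cnj_sum mult.commute)
  finally show ?thesis by (simp only: cnj_mult_self of_real_sum)
qed

lemma ketbra_sum_psd: "(\<And>k. k \<in> K \<Longrightarrow> dim_vec (w k) = n) \<Longrightarrow> psd_mat n (ketbra_sum n K w)"
  unfolding psd_mat_def by (auto simp: ketbra_sum_quad_form sum_nonneg)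

lemma ketbra_sum_trace:
  "(\<And>k. k \<in> K \<Longrightarrow> dim_vec (w k) = n) \<Longrightarrow> mtrace (ketbra_sum n K w) = (\<Sum>k\<in>K. cinner (w k) (w k))"
  by (simp add: mtrace_def cinner_def sum.swap[of _ "{..<n}" K] mult.commute)

lemma ketbra_sum_adj: "mat_adj (ketbra_sum n K w) = ketbra_sum n K w"
  by (intro eq_matI) (auto simp: mat_adj_def cnj_sum mult.commute)

lemma ketbra_sum_hs_inner:
  assumes "\<And>k. k \<in> K \<Longrightarrow> dim_vec (w k) = n" "\<And>l. l \<in> L \<Longrightarrow> dim_vec (v l) = n"
  shows "hs_inner (ketbra_sum n K w) (ketbra_sum n L v)
    = of_real (\<Sum>k\<in>K. \<Sum>l\<in>L. (cmod (cinner (w k) (v l)))\<^sup>2)"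
proof -
  have "hs_inner (ketbra_sum n K w) (ketbra_sum n L v)
      = (\<Sum>a<n. \<Sum>b<n. (\<Sum>k\<in>K. w k $ a * cnj (w k $ b)) * (\<Sum>l\<in>L. v l $ b * cnj (v l $ a)))"
    unfolding hs_inner_def ketbra_sum_adj mtrace_def
    by (simp add: scalar_prod_def atLeast0LessThan)
  also have "\<dots> = (\<Sum>a<n. \<Sum>b<n. \<Sum>k\<in>K. \<Sum>l\<in>L. (cnj (v l $ a) * w k $ a) * (cnj (w k $ b) * v l $ b))"
    by (simp only: sum_product) (simp only: mult_ac)
  also have "\<dots> = (\<Sum>k\<in>K. \<Sum>l\<in>L. (\<Sum>a<n. cnj (v l $ a) * w k $ a) * (\<Sum>b<n. cnj (w k $ b) * v l $ b))"
    by (simp only: sum_product sum.swap[of _ "{..<n}" K] sum.swap[of _ "{..<n}" L])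
  also have "\<dots> = (\<Sum>k\<in>K. \<Sum>l\<in>L. cnj (cinner (w k) (v l)) * cinner (w k) (v l))"
    using assms by (intro sum.cong refl) (simp add: cinner_def cnj_sum mult.commute)
  finally show ?thesis by (simp only: cnj_mult_self of_real_sum)
qed

lemma ketbra_sum_hs_inner_eq_0D:
  assumes "finite K" "finite L" "\<And>k. k \<in> K \<Longrightarrow> dim_vec (w k) = n" "\<And>l. l \<in> L \<Longrightarrow> dim_vec (v l) = n"
    and "hs_inner (ketbra_sum n K w) (ketbra_sum n L v) = 0" "k \<in> K" "l \<in> L"
  shows "cinner (w k) (v l) = 0"
proof -
  have "(\<Sum>k\<in>K. \<Sum>l\<in>L. (cmod (cinner (w k) (v l)))\<^sup>2) = 0"
    using assms(5) by (simp only: ketbra_sum_hs_inner[OF assms(3,4)] of_real_eq_0_iff)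
  then show ?thesis
    using assms(1,2,6,7) by (simp add: sum_nonneg_eq_0_iff sum_nonneg)
qed

lemma ketbra_sum_singleton: "dim_vec x = n \<Longrightarrow> ketbra_sum n {k} (\<lambda>_. x) = ketbra x"
  by (intro eq_matI) (auto simp: ketbra_def)

lemma ketbra_carrier: "ketbra x \<in> carrier_mat (dim_vec x) (dim_vec x)"
  by (simp add: ketbra_def)

lemma ketbra_adj: "mat_adj (ketbra x) = ketbra x"
  by (simp add: ketbra_sum_singleton[of x _ "()", symmetric] ketbra_sum_adj)

lemma ketbra_psd: "psd_mat (dim_vec x) (ketbra x)"
  by (simp add: ketbra_sum_singleton[of x _ "()", symmetric] ketbra_sum_psd)

lemma mtrace_ketbra: "mtrace (ketbra x) = cinner x x"
  by (simp add: ketbra_sum_singleton[of x _ "()", symmetric] ketbra_sum_trace)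

lemma ketbra_sum_add_smult:
  assumes w: "\<And>k. k \<in> K \<Longrightarrow> dim_vec (w k) = n" and u: "dim_vec u = n"
    and orth: "\<And>a. a < n \<Longrightarrow> (\<Sum>k\<in>K. c k * w k $ a) = 0" and norm: "(\<Sum>k\<in>K. (c k)\<^sup>2) = 1"
  shows "ketbra_sum n K (\<lambda>k. w k + complex_of_real (c k) \<cdot>\<^sub>v u) = ketbra u + ketbra_sum n K w"
proof (rule eq_matI)
  fix a b assume "a < dim_row (ketbra u + ketbra_sum n K w)"
    and "b < dim_col (ketbra u + ketbra_sum n K w)"
  then have ab: "a < n" "b < n" by (auto simp: ketbra_def u)
  let ?v = "\<lambda>k. w k + complex_of_real (c k) \<cdot>\<^sub>v u"
  have "(\<Sum>k\<in>K. ?v k $ a * cnj (?v k $ b))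
      = (\<Sum>k\<in>K. w k $ a * cnj (w k $ b)) + u $ a * cnj (\<Sum>k\<in>K. c k * w k $ b)
        + (\<Sum>k\<in>K. c k * w k $ a) * cnj (u $ b) + (\<Sum>k\<in>K. (c k)\<^sup>2) * (u $ a * cnj (u $ b))"
    using w u ab
    by (simp add: algebra_simps sum.distrib sum_distrib_left sum_distrib_right cnj_sum
        power2_eq_square)
  then show "ketbra_sum n K ?v $$ (a, b) = (ketbra u + ketbra_sum n K w) $$ (a, b)"
    using ab u by (simp add: orth norm ketbra_def flip: of_real_sum)
qed (auto simp: ketbra_def u)

lemma ketbra_sum_Times_index:
  assumes "a < n" "b < n"
  shows "ketbra_sum n (I \<times> K) (\<lambda>(i, k). w i k) $$ (a, b) = (\<Sum>i\<in>I. ketbra_sum n K (w i) $$ (a, b))"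
  using assms by (simp add: sum.cartesian_product split_def)

lemma mtrace_ketbra_sum_Times:
  "mtrace (ketbra_sum n (I \<times> K) (\<lambda>(i, k). w i k)) = (\<Sum>i\<in>I. mtrace (ketbra_sum n K (w i)))"
  by (simp add: mtrace_def ketbra_sum_Times_index sum.swap[of _ I] del: ketbra_sum_index)

lemma loewner_le_ketbra_sum_Times:
  assumes "finite I" "j \<in> I" "B \<in> carrier_mat n n"
    and "\<And>i k. i \<in> I \<Longrightarrow> k \<in> K \<Longrightarrow> dim_vec (w i k) = n"
  shows "loewner_le n (B + ketbra_sum n K (w j)) (B + ketbra_sum n (I \<times> K) (\<lambda>(i, k). w i k))"
proof -
  let ?R = "ketbra_sum n ((I - {j}) \<times> K) (\<lambda>(i, k). w i k)"
  have "B + ketbra_sum n (I \<times> K) (\<lambda>(i, k). w i k) - (B + ketbra_sum n K (w j)) = ?R"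
    using assms(1-3)
    by (intro eq_matI) (auto simp: ketbra_sum_Times_index sum.remove simp del: ketbra_sum_index)
  moreover have "psd_mat n ?R" using assms(4) by (intro ketbra_sum_psd) auto
  ultimately show ?thesis using assms(3) by (simp add: loewner_le_def)
qed

lemma hermitian_upper_bound:
  assumes "finite I" "dim_vec u = n" "\<And>i k. i \<in> I \<Longrightarrow> k \<in> K \<Longrightarrow> dim_vec (w i k) = n"
  shows "\<exists>H. hermitian_mat n H \<and> (\<forall>i\<in>I. loewner_le n (ketbra u + ketbra_sum n K (w i)) H) \<and>
    mtrace H = cinner u u + (\<Sum>i\<in>I. mtrace (ketbra_sum n K (w i)))"
proof (intro exI conjI ballI)
  let ?H = "ketbra u + ketbra_sum n (I \<times> K) (\<lambda>(i, k). w i k)"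
  have u: "ketbra u \<in> carrier_mat n n" using ketbra_carrier[of u] assms(2) by simp
  show "hermitian_mat n ?H"
    using u by (simp add: hermitian_mat_def mat_adj_add ketbra_adj ketbra_sum_adj)
  show "loewner_le n (ketbra u + ketbra_sum n K (w i)) ?H" if "i \<in> I" for i
    using assms that u by (intro loewner_le_ketbra_sum_Times) auto
  show "mtrace ?H = cinner u u + (\<Sum>i\<in>I. mtrace (ketbra_sum n K (w i)))"
    using u by (simp add: mtrace_add mtrace_ketbra mtrace_ketbra_sum_Times)
qed

section \<open>Orthonormal families and trace bounds\<close>

definition orthonormal :: "nat \<Rightarrow> 'k set \<Rightarrow> ('k \<Rightarrow> complex vec) \<Rightarrow> bool" where
  "orthonormal n K f \<longleftrightarrow> (\<forall>k\<in>K. dim_vec (f k) = n) \<and>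
     (\<forall>k\<in>K. \<forall>l\<in>K. cinner (f k) (f l) = (if k = l then 1 else 0))"

definition orth_proj :: "nat \<Rightarrow> 'k set \<Rightarrow> ('k \<Rightarrow> complex vec) \<Rightarrow> complex vec \<Rightarrow> complex vec" where
  "orth_proj n K f w = vec n (\<lambda>a. \<Sum>k\<in>K. cinner (f k) w * f k $ a)"

lemma orth_proj_dim [simp]: "dim_vec (orth_proj n K f w) = n"
  by (simp add: orth_proj_def)

lemma cinner_orth_proj_right:
  assumes "orthonormal n K f" "dim_vec x = n"
  shows "cinner x (orth_proj n K f w) = (\<Sum>k\<in>K. cinner (f k) w * cinner x (f k))"
  using assms
  by (simp add: orthonormal_def orth_proj_def cinner_def sum_distrib_left mult_ac
      sum.swap[of _ "{..<n}" K])

lemma cinner_orth_proj_left: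
  assumes "orthonormal n K f" "dim_vec y = n"
  shows "cinner (orth_proj n K f w) y = (\<Sum>k\<in>K. cnj (cinner (f k) w) * cinner (f k) y)"
proof -
  have "cinner (orth_proj n K f w) y = cnj (cinner y (orth_proj n K f w))"
    using assms(2) by (intro cinner_commute) simp
  also have "\<dots> = (\<Sum>k\<in>K. cnj (cinner (f k) w) * cnj (cinner y (f k)))"
    using assms by (simp add: cinner_orth_proj_right)
  also have "\<dots> = (\<Sum>k\<in>K. cnj (cinner (f k) w) * cinner (f k) y)"
    using assms by (intro sum.cong refl) (simp add: orthonormal_def cinner_commute[of "f _" y])
  finally show ?thesis .
qed

lemma orthonormal_cinner_orth_proj:
  assumes "orthonormal n K f" "finite K" "j \<in> K"
  shows "cinner (f j) (orth_proj n K f w) = cinner (f j) w"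
proof -
  have "cinner (f j) (orth_proj n K f w) = (\<Sum>k\<in>K. cinner (f k) w * cinner (f j) (f k))"
    using assms by (intro cinner_orth_proj_right) (auto simp: orthonormal_def)
  also have "\<dots> = (\<Sum>k\<in>K. if k = j then cinner (f k) w else 0)"
    using assms by (intro sum.cong refl) (auto simp: orthonormal_def)
  finally show ?thesis using assms(2,3) by simp
qed

lemma parseval:
  assumes "orthonormal n K f" "dim_vec w = n" "w = orth_proj n K f w"
  shows "Re (cinner w w) = (\<Sum>k\<in>K. (cmod (cinner (f k) w))\<^sup>2)"
proof -
  have "cinner w w = (\<Sum>k\<in>K. cinner (f k) w * cinner w (f k))"
    using assms by (subst (2) assms(3), subst cinner_orth_proj_right) auto
  also have "\<dots> = (\<Sum>k\<in>K. cinner (f k) w * cnj (cinner (f k) w))"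
    using assms(1,2) by (intro sum.cong refl) (simp add: orthonormal_def cinner_commute[of "f _" w])
  finally show ?thesis by (simp only: complex_norm_square[symmetric] Re_sum Re_complex_of_real)
qed

lemma orth_proj_residual:
  assumes f: "orthonormal n K f" and K: "finite K" and W: "dim_vec W = n"
  shows "j \<in> K \<Longrightarrow> cinner (f j) (W - orth_proj n K f W) = 0"
    and "u = orth_proj n K f u \<Longrightarrow> cinner (W - orth_proj n K f W) u = 0"
proof -
  have fd: "dim_vec (f j) = n" if "j \<in> K" for j using f that by (simp add: orthonormal_def)
  show fr: "cinner (f j) (W - orth_proj n K f W) = 0" if "j \<in> K" for j
    using that W fd orthonormal_cinner_orth_proj[OF f K that, of W] by (simp add: cinner_diff_right)
  assume u: "u = orth_proj n K f u"
  have "cinner (W - orth_proj n K f W) (f j) = 0" if "j \<in> K" for j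
    using fr[OF that] fd[OF that] W cinner_commute[of "f j" "W - orth_proj n K f W"] by simp
  then show "cinner (W - orth_proj n K f W) u = 0"
    using W by (subst u) (simp add: cinner_orth_proj_right[OF f])
qed

definition normalize_vec :: "complex vec \<Rightarrow> complex vec" where
  "normalize_vec r = (1 / of_real (sqrt (Re (cinner r r)))) \<cdot>\<^sub>v r"

lemma cinner_normalize_vec_left:
  "cinner (normalize_vec r) y = cinner r y / of_real (sqrt (Re (cinner r r)))"
  by (simp add: normalize_vec_def cinner_smult_left)

lemma cinner_normalize_vec_right:
  "dim_vec y = dim_vec r \<Longrightarrow>
    cinner y (normalize_vec r) = cinner y r / of_real (sqrt (Re (cinner r r)))"
  by (simp add: normalize_vec_def cinner_smult_right)

lemma cinner_self_sqrt:
  assumes "r \<noteq> 0\<^sub>v (dim_vec r)"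
  shows "of_real (sqrt (Re (cinner r r))) * of_real (sqrt (Re (cinner r r))) = cinner r r"
    and "sqrt (Re (cinner r r)) > 0"
proof -
  have "cinner r r \<noteq> 0" using assms cinner_self_eq_0D by auto
  then have "Re (cinner r r) > 0"
    using cinner_self_nonneg[of r] cinner_self_real[of r] by (auto simp: less_le)
  then show "sqrt (Re (cinner r r)) > 0"
    and "of_real (sqrt (Re (cinner r r))) * of_real (sqrt (Re (cinner r r))) = cinner r r"
    using cinner_self_real[of r] by (auto simp flip: of_real_mult)
qed

lemma normalize_vec_dim [simp]: "dim_vec (normalize_vec r) = dim_vec r"
  by (simp add: normalize_vec_def)

lemma normalize_vec_unit:
  assumes "r \<noteq> 0\<^sub>v (dim_vec r)"
  shows "cinner (normalize_vec r) (normalize_vec r) = 1"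
proof -
  define s where "s = complex_of_real (sqrt (Re (cinner r r)))"
  have s: "cinner r r = s * s" "s \<noteq> 0" using cinner_self_sqrt[OF assms] by (simp_all add: s_def)
  have "cinner (normalize_vec r) (normalize_vec r) = cinner r r / s / s"
    by (simp add: cinner_normalize_vec_left cinner_normalize_vec_right s_def)
  also have "\<dots> = 1" using s by simp
  finally show ?thesis .
qed

lemma normalize_vec_proj:
  assumes "r \<noteq> 0\<^sub>v (dim_vec r)"
  shows "cinner (normalize_vec r) r \<cdot>\<^sub>v normalize_vec r = r"
proof -
  define s where "s = complex_of_real (sqrt (Re (cinner r r)))"
  have s: "cinner r r = s * s" "s \<noteq> 0" using cinner_self_sqrt[OF assms] by (simp_all add: s_def)
  have "cinner (normalize_vec r) r \<cdot>\<^sub>v normalize_vec r = (cinner r r / s / s) \<cdot>\<^sub>v r"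
    by (intro eq_vecI) (simp_all add: cinner_smult_left normalize_vec_def s_def)
  also have "\<dots> = r" using s by (intro eq_vecI) simp_all
  finally show ?thesis .
qed

lemma orthonormal_extend:
  fixes f :: "nat \<Rightarrow> complex vec"
  assumes f: "orthonormal n {..<c} f" and g: "dim_vec g = n" "cinner g g = 1"
    and fg: "\<And>j. j < c \<Longrightarrow> cinner (f j) g = 0"
  shows "orthonormal n {..<Suc c} (f(c := g))"
    and "orth_proj n {..<Suc c} (f(c := g)) u = orth_proj n {..<c} f u + cinner g u \<cdot>\<^sub>v g"
proof -
  have "cinner g (f j) = 0" if "j < c" for j
    using fg[OF that] f g that by (simp add: orthonormal_def cinner_commute[of "f j" g])
  then show "orthonormal n {..<Suc c} (f(c := g))"
    using f g fg by (auto simp: orthonormal_def less_Suc_eq)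
  have "orth_proj n {..<c} (f(c := g)) u = orth_proj n {..<c} f u"
    by (simp add: orth_proj_def)
  then show "orth_proj n {..<Suc c} (f(c := g)) u = orth_proj n {..<c} f u + cinner g u \<cdot>\<^sub>v g"
    using g by (intro eq_vecI) (auto simp: orth_proj_def)
qed

definition onb_of_span ::
    "nat \<Rightarrow> 'k set \<Rightarrow> ('k \<Rightarrow> complex vec) \<Rightarrow> nat \<Rightarrow> (nat \<Rightarrow> complex vec) \<Rightarrow> bool" where
  "onb_of_span n K w c f \<longleftrightarrow> orthonormal n {..<c} f \<and> (\<forall>k\<in>K. w k = orth_proj n {..<c} f (w k)) \<and>
     (\<forall>v. dim_vec v = n \<longrightarrow> (\<forall>k\<in>K. cinner (w k) v = 0) \<longrightarrow> (\<forall>j<c. cinner (f j) v = 0))"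

text \<open>Adjoin the normalised component of \<open>W\<close> orthogonal to the span of \<open>f\<close>.\<close>
lemma gram_schmidt_step:
  fixes f :: "nat \<Rightarrow> complex vec"
  assumes f: "orthonormal n {..<c} f" and W: "dim_vec W = n"
  obtains c' :: nat and f' :: "nat \<Rightarrow> complex vec"
  where "orthonormal n {..<c'} f'" "W = orth_proj n {..<c'} f' W"
    "\<And>u. u = orth_proj n {..<c} f u \<Longrightarrow> u = orth_proj n {..<c'} f' u"
    "\<And>v. dim_vec v = n \<Longrightarrow> cinner W v = 0 \<Longrightarrow> \<forall>j<c. cinner (f j) v = 0 \<Longrightarrow> \<forall>j<c'. cinner (f' j) v = 0"
proof -
  have fd: "dim_vec (f j) = n" if "j < c" for j using f that by (simp add: orthonormal_def)
  define P where "P = orth_proj n {..<c} f W"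
  define r where "r = W - P"
  have r: "dim_vec r = n" "dim_vec P = n" by (simp_all add: r_def P_def)
  have W_split: "W = r + P" using W r by (intro eq_vecI) (auto simp: r_def)
  have fr: "cinner (f j) r = 0" if "j < c" for j
    using orth_proj_residual(1)[OF f finite_lessThan W] that by (simp add: r_def P_def)
  have r_orth: "cinner r u = 0" if "u = orth_proj n {..<c} f u" for u
    using orth_proj_residual(2)[OF f finite_lessThan W that] by (simp add: r_def P_def)
  show ?thesis
  proof (cases "r = 0\<^sub>v n")
    case True
    then have "W = P" using W_split r left_zero_vec[OF carrier_vecI[OF r(2)]] by simp
    then show ?thesis using that[of c f] f by (auto simp: P_def)
  next
    case False
    then have r0: "r \<noteq> 0\<^sub>v (dim_vec r)" using r by simp
    define g where "g = normalize_vec r"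
    have "cinner g g = 1" unfolding g_def by (rule normalize_vec_unit[OF r0])
    then have g: "dim_vec g = n" "cinner g g = 1" "\<And>j. j < c \<Longrightarrow> cinner (f j) g = 0"
      using r fr fd by (simp_all add: g_def cinner_normalize_vec_right)
    note ext = orthonormal_extend[OF f g]
    show ?thesis
    proof (rule that[OF ext(1)])
      have "cinner r (f j) = 0" if "j < c" for j
        using fr[OF that] fd[OF that] r by (simp add: cinner_commute[of "f j" r])
      then have "cinner r P = 0" using r by (simp add: P_def cinner_orth_proj_right[OF f])
      then have "cinner g W = cinner g r"
        by (subst W_split) (simp add: g_def cinner_normalize_vec_left cinner_add_right r)
      moreover have "cinner g r \<cdot>\<^sub>v g = r" unfolding g_def by (rule normalize_vec_proj[OF r0])
      ultimately have "cinner g W \<cdot>\<^sub>v g = r" by simp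
      then have "orth_proj n {..<Suc c} (f(c := g)) W = P + r"
        by (simp add: ext(2) P_def)
      then show "W = orth_proj n {..<Suc c} (f(c := g)) W"
        using r W by (intro eq_vecI) (auto simp: r_def)
    next
      fix u assume u: "u = orth_proj n {..<c} f u"
      have "dim_vec u = n" by (subst u) simp
      moreover have "cinner g u = 0"
        using r_orth[OF u] by (simp add: g_def cinner_normalize_vec_left)
      ultimately show "u = orth_proj n {..<Suc c} (f(c := g)) u"
        using g by (intro eq_vecI) (auto simp: ext(2) u[symmetric])
    next
      fix v assume v: "dim_vec v = n" "cinner W v = 0" "\<forall>j<c. cinner (f j) v = 0"
      have "cinner P v = 0" using v by (simp add: P_def cinner_orth_proj_left[OF f])
      then have "cinner g v = 0"
        using v r(2) W by (simp add: g_def cinner_normalize_vec_left r_def cinner_diff_left)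
      then show "\<forall>j<Suc c. cinner ((f(c := g)) j) v = 0"
        using v by (auto simp: less_Suc_eq)
    qed
  qed
qed

lemma gram_schmidt:
  assumes "finite K" "\<And>k. k \<in> K \<Longrightarrow> dim_vec (w k) = n"
  shows "\<exists>c f. onb_of_span n K w c f"
  using assms
proof (induction K rule: finite_induct)
  case empty
  show ?case by (rule exI[of _ 0]) (simp add: onb_of_span_def orthonormal_def)
next
  case (insert x K)
  then obtain c f where f: "onb_of_span n K w c f" by auto
  have "dim_vec (w x) = n" using insert.prems by simp
  then show ?case
  proof (rule gram_schmidt_step[OF conjunct1[OF f[unfolded onb_of_span_def]]])
    fix c' :: nat and f'
    assume "orthonormal n {..<c'} f'" "w x = orth_proj n {..<c'} f' (w x)"
      "\<And>u. u = orth_proj n {..<c} f u \<Longrightarrow> u = orth_proj n {..<c'} f' u"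
      "\<And>v. dim_vec v = n \<Longrightarrow> cinner (w x) v = 0 \<Longrightarrow> \<forall>j<c. cinner (f j) v = 0 \<Longrightarrow>
         \<forall>j<c'. cinner (f' j) v = 0"
    then have "onb_of_span n (insert x K) w c' f'" using f by (auto simp: onb_of_span_def)
    then show ?case by blast
  qed
qed

lemma ketbra_sum_orthonormal_idem:
  assumes S: "finite S" and f: "orthonormal n S f"
  shows "ketbra_sum n S f * ketbra_sum n S f = ketbra_sum n S f"
proof (rule eq_matI)
  fix a b assume "a < dim_row (ketbra_sum n S f)" "b < dim_col (ketbra_sum n S f)"
  then have ab: "a < n" "b < n" by simp_all
  have fd: "dim_vec (f x) = n" if "x \<in> S" for x using f that by (simp add: orthonormal_def)
  have "(ketbra_sum n S f * ketbra_sum n S f) $$ (a, b)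
      = (\<Sum>j<n. \<Sum>x\<in>S. \<Sum>y\<in>S. (f x $ a * cnj (f y $ b)) * (cnj (f x $ j) * f y $ j))"
    using ab by (simp add: scalar_prod_def atLeast0LessThan sum_product) (simp add: mult_ac)
  also have "\<dots> = (\<Sum>x\<in>S. \<Sum>y\<in>S. (f x $ a * cnj (f y $ b)) * cinner (f x) (f y))"
    using fd by (subst sum_swap3) (simp add: cinner_def sum_distrib_left)
  also have "\<dots> = (\<Sum>x\<in>S. \<Sum>y\<in>S. if x = y then f x $ a * cnj (f y $ b) else 0)"
    using f by (intro sum.cong refl) (simp add: orthonormal_def)
  finally show "(ketbra_sum n S f * ketbra_sum n S f) $$ (a, b) = ketbra_sum n S f $$ (a, b)"
    using S ab by simp
qed simp_all

lemma ketbra_sum_complement_gram: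
  assumes S: "finite S" and f: "orthonormal n S f" and ab: "a < n" "b < n"
  defines "P \<equiv> ketbra_sum n S f"
  shows "(\<Sum>j<n. cnj ((if a = j then 1 else 0) - P $$ (a, j))
      * ((if b = j then 1 else 0) - P $$ (b, j))) = (if a = b then 1 else 0) - P $$ (b, a)"
proof -
  have idem: "(\<Sum>j<n. P $$ (b, j) * P $$ (j, a)) = P $$ (b, a)"
    using arg_cong[OF ketbra_sum_orthonormal_idem[OF S f], of "\<lambda>M. M $$ (b, a)"] ab
    by (simp add: P_def scalar_prod_def atLeast0LessThan del: ketbra_sum_index)
  have "(\<Sum>j<n. cnj ((if a = j then 1 else 0) - P $$ (a, j))
        * ((if b = j then 1 else 0) - P $$ (b, j)))
      = (\<Sum>j<n. (if j = a then (if j = b then 1 else 0) else 0)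
        - (if j = a then P $$ (b, j) else 0) - (if j = b then P $$ (j, a) else 0)
        + P $$ (b, j) * P $$ (j, a))"
    using ab by (intro sum.cong refl) (simp add: P_def cnj_sum algebra_simps)
  also have "\<dots> = (if a = b then 1 else 0) - P $$ (b, a) - P $$ (b, a) + P $$ (b, a)"
    using ab by (simp add: sum.distrib sum_subtractf idem)
  finally show ?thesis by simp
qed

text \<open>With \<open>P\<close> the projection onto the span of \<open>f\<close>, \<open>tr H - \<Sum>\<^sub>x \<langle>f\<^sub>x, H f\<^sub>x\<rangle> = tr ((I - P) H (I - P))\<close>,
  the sum of the forms of \<open>H\<close> on the columns \<open>c\<^sub>j\<close> of \<open>I - P\<close>.\<close>
lemma bessel_psd:
  assumes H: "psd_mat n H" and S: "finite S" and f: "orthonormal n S f"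
  shows "Re (\<Sum>x\<in>S. cinner (f x) (H *\<^sub>v f x)) \<le> Re (mtrace H)"
proof -
  have Hc: "H \<in> carrier_mat n n" using psd_mat_carrier[OF H] .
  have fd: "dim_vec (f x) = n" if "x \<in> S" for x using f that by (simp add: orthonormal_def)
  define P where "P = ketbra_sum n S f"
  define c where "c j = vec n (\<lambda>a. (if a = j then 1 else 0) - P $$ (a, j))" for j
  have cd: "dim_vec (c j) = n" for j by (simp add: c_def)
  have c_gram: "(\<Sum>j<n. cnj (c j $ a) * c j $ b) = (if a = b then 1 else 0) - P $$ (b, a)"
    if "a < n" "b < n" for a b
    using ketbra_sum_complement_gram[OF S f that] that by (simp add: c_def P_def)
  have "(\<Sum>j<n. cinner (c j) (H *\<^sub>v c j))
      = (\<Sum>j<n. \<Sum>a<n. \<Sum>b<n. cnj (c j $ a) * H $$ (a, b) * c j $ b)"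
    using Hc cd by (simp add: quad_form_expand)
  also have "\<dots> = (\<Sum>a<n. \<Sum>b<n. H $$ (a, b) * (\<Sum>j<n. cnj (c j $ a) * c j $ b))"
    by (subst sum_swap3) (simp add: sum_distrib_left mult_ac)
  also have "\<dots> = (\<Sum>a<n. \<Sum>b<n. H $$ (a, b) * ((if a = b then 1 else 0) - P $$ (b, a)))"
    by (intro sum.cong refl) (simp add: c_gram)
  also have "\<dots> = mtrace H - (\<Sum>a<n. \<Sum>b<n. H $$ (a, b) * P $$ (b, a))"
    using Hc by (simp add: mtrace_def right_diff_distrib sum_subtractf if_distrib[of "\<lambda>x. _ * x"])
  also have "(\<Sum>a<n. \<Sum>b<n. H $$ (a, b) * P $$ (b, a))
      = (\<Sum>x\<in>S. \<Sum>a<n. \<Sum>b<n. cnj (f x $ a) * H $$ (a, b) * f x $ b)"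
    by (simp add: P_def sum_distrib_left mult_ac sum.swap[of _ S])
  also have "\<dots> = (\<Sum>x\<in>S. cinner (f x) (H *\<^sub>v f x))"
    using Hc fd by (simp add: quad_form_expand)
  finally have "(\<Sum>j<n. cinner (c j) (H *\<^sub>v c j)) = mtrace H - (\<Sum>x\<in>S. cinner (f x) (H *\<^sub>v f x))" .
  moreover have "0 \<le> Re (\<Sum>j<n. cinner (c j) (H *\<^sub>v c j))"
    using psd_matD[OF H cd] by (auto simp: Re_sum intro: sum_nonneg)
  ultimately show ?thesis by simp
qed

lemma onb_of_span_orth:
  assumes f: "onb_of_span n K w c f" and g: "onb_of_span n L v c' g"
    and w: "\<And>k. k \<in> K \<Longrightarrow> dim_vec (w k) = n" and v: "\<And>l. l \<in> L \<Longrightarrow> dim_vec (v l) = n"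
    and wv: "\<And>k l. k \<in> K \<Longrightarrow> l \<in> L \<Longrightarrow> cinner (w k) (v l) = 0" and j: "j < c" and l: "l < c'"
  shows "cinner (f j) (g l) = 0"
proof -
  have gl: "dim_vec (g l) = n" using g l by (simp add: onb_of_span_def orthonormal_def)
  have "cinner (g l) (w k) = 0" if "k \<in> K" for k
    using g w[OF that] wv[OF that] v l cinner_commute[of "v _" "w k"]
    by (auto simp: onb_of_span_def)
  then have "cinner (w k) (g l) = 0" if "k \<in> K" for k
    using that w gl cinner_commute[of "g l" "w k"] by simp
  then show ?thesis using f gl j by (simp add: onb_of_span_def)
qed

lemma ketbra_sum_trace_onb_of_span:
  assumes f: "onb_of_span n K w c f" and w: "\<And>k. k \<in> K \<Longrightarrow> dim_vec (w k) = n"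
  shows "Re (mtrace (ketbra_sum n K w)) = (\<Sum>j<c. Re (cinner (f j) (ketbra_sum n K w *\<^sub>v f j)))"
proof -
  have f_on: "orthonormal n {..<c} f" and fd: "\<And>j. j < c \<Longrightarrow> dim_vec (f j) = n"
    using f by (simp_all add: onb_of_span_def orthonormal_def)
  have "Re (mtrace (ketbra_sum n K w)) = (\<Sum>k\<in>K. Re (cinner (w k) (w k)))"
    using w by (simp add: ketbra_sum_trace)
  also have "\<dots> = (\<Sum>k\<in>K. \<Sum>j<c. (cmod (cinner (f j) (w k)))\<^sup>2)"
    using f w by (intro sum.cong refl parseval[OF f_on]) (auto simp: onb_of_span_def)
  also have "\<dots> = (\<Sum>j<c. \<Sum>k\<in>K. (cmod (cinner (w k) (f j)))\<^sup>2)"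
    using w fd by (subst sum.swap) (simp add: cinner_commute[of "f _" "w _"])
  also have "\<dots> = (\<Sum>j<c. Re (cinner (f j) (ketbra_sum n K w *\<^sub>v f j)))"
    using w fd by (simp add: ketbra_sum_quad_form)
  finally show ?thesis .
qed

text \<open>Each family is replaced by an orthonormal basis of its span; the union of these bases is
  orthonormal, and Bessel's inequality for \<open>H\<close> on it gives the bound.\<close>
lemma trace_ge_sum_orthogonal:
  fixes w :: "'s \<Rightarrow> 'k \<Rightarrow> complex vec"
  assumes S: "finite S" and K: "\<And>s. s \<in> S \<Longrightarrow> finite (K s)" and H: "psd_mat n H"
    and dim: "\<And>s k. s \<in> S \<Longrightarrow> k \<in> K s \<Longrightarrow> dim_vec (w s k) = n"
    and orth: "\<And>s t k l. s \<in> S \<Longrightarrow> t \<in> S \<Longrightarrow> s \<noteq> t \<Longrightarrow> k \<in> K s \<Longrightarrow> l \<in> K t \<Longrightarrow>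
      cinner (w s k) (w t l) = 0"
    and le: "\<And>s. s \<in> S \<Longrightarrow> psd_mat n (H - ketbra_sum n (K s) (w s))"
  shows "(\<Sum>s\<in>S. Re (mtrace (ketbra_sum n (K s) (w s)))) \<le> Re (mtrace H)"
proof -
  have "\<forall>s\<in>S. \<exists>c f. onb_of_span n (K s) (w s) c f"
  proof
    fix s assume "s \<in> S"
    then show "\<exists>c f. onb_of_span n (K s) (w s) c f" by (intro gram_schmidt K dim)
  qed
  then obtain C F where F: "\<And>s. s \<in> S \<Longrightarrow> onb_of_span n (K s) (w s) (C s) (F s)"
    by (metis bchoice)
  have Fd: "dim_vec (F s j) = n" if "s \<in> S" "j < C s" for s j
    using F[OF that(1)] that(2) by (simp add: onb_of_span_def orthonormal_def)
  define T where "T = Sigma S (\<lambda>s. {..<C s})"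
  have "cinner (F s j) (F t l) = (if (s, j) = (t, l) then 1 else 0)"
    if "s \<in> S" "t \<in> S" "j < C s" "l < C t" for s t j l
  proof (cases "s = t")
    case True
    then show ?thesis using F[OF that(1)] that by (auto simp: onb_of_span_def orthonormal_def)
  next
    case False
    then show ?thesis using onb_of_span_orth[OF F F] that dim orth by auto
  qed
  then have "orthonormal n T (\<lambda>(s, j). F s j)"
    using Fd by (auto simp: orthonormal_def T_def)
  moreover have "finite T" using S by (simp add: T_def finite_SigmaI)
  ultimately have bessel: "Re (\<Sum>(s, j)\<in>T. cinner (F s j) (H *\<^sub>v F s j)) \<le> Re (mtrace H)"
    using bessel_psd[OF H] by (simp add: case_prod_beta')
  have "(\<Sum>s\<in>S. Re (mtrace (ketbra_sum n (K s) (w s))))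
      = (\<Sum>s\<in>S. \<Sum>j<C s. Re (cinner (F s j) (ketbra_sum n (K s) (w s) *\<^sub>v F s j)))"
    using F dim by (intro sum.cong refl ketbra_sum_trace_onb_of_span) auto
  also have "\<dots> \<le> (\<Sum>s\<in>S. \<Sum>j<C s. Re (cinner (F s j) (H *\<^sub>v F s j)))"
    using le psd_mat_carrier[OF H] Fd by (intro sum_mono quad_form_mono) auto
  also have "\<dots> = Re (\<Sum>(s, j)\<in>T. cinner (F s j) (H *\<^sub>v F s j))"
    using S by (simp add: T_def Re_sum sum.Sigma split_def)
  finally show ?thesis using bessel by linarith
qed

lemma trace_ge_of_loewner_le_orthogonal:
  fixes w :: "'i \<Rightarrow> 'k \<Rightarrow> complex vec"
  assumes I: "finite I" "I \<noteq> {}" and K: "finite K" and u: "dim_vec u = n"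
    and w: "\<And>i k. i \<in> I \<Longrightarrow> k \<in> K \<Longrightarrow> dim_vec (w i k) = n"
    and wu: "\<And>i k. i \<in> I \<Longrightarrow> k \<in> K \<Longrightarrow> cinner (w i k) u = 0"
    and ww: "\<And>i j k l. i \<in> I \<Longrightarrow> j \<in> I \<Longrightarrow> i \<noteq> j \<Longrightarrow> k \<in> K \<Longrightarrow> l \<in> K \<Longrightarrow> cinner (w i k) (w j l) = 0"
    and le: "\<And>i. i \<in> I \<Longrightarrow> loewner_le n (ketbra u + ketbra_sum n K (w i)) H"
  shows "Re (cinner u u) + (\<Sum>i\<in>I. Re (mtrace (ketbra_sum n K (w i)))) \<le> Re (mtrace H)"
proof -
  let ?B = "ketbra u" and ?A = "\<lambda>i. ketbra_sum n K (w i)"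
  have "psd_mat n ?B" using ketbra_psd[of u] u by simp
  moreover have "psd_mat n (?A i)" if "i \<in> I" for i using w that by (intro ketbra_sum_psd) auto
  ultimately have H: "psd_mat n H" "psd_mat n (H - ?B)" "psd_mat n (H - ?A i)" if "i \<in> I" for i
    using loewner_le_add_psdD[OF le[OF that]] that by blast+
  obtain i0 where i0: "i0 \<in> I" using I(2) by blast
  \<comment> \<open>\<open>|u\<rangle>\<langle>u|\<close> joins the families as the one-vector family indexed by \<open>None\<close>.\<close>
  define S where "S = insert None (Some ` I)"
  define K' where "K' s = (case s of None \<Rightarrow> {undefined} | Some _ \<Rightarrow> K)" for s :: "'i option"
  define w' where "w' s = (case s of None \<Rightarrow> (\<lambda>_. u) | Some i \<Rightarrow> w i)" for s
  have A': "ketbra_sum n (K' s) (w' s) = (case s of None \<Rightarrow> ?B | Some i \<Rightarrow> ?A i)" for s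
    using u by (cases s) (simp_all add: K'_def w'_def ketbra_sum_singleton)
  have "(\<Sum>s\<in>S. Re (mtrace (ketbra_sum n (K' s) (w' s)))) \<le> Re (mtrace H)"
  proof (rule trace_ge_sum_orthogonal)
    show "finite S" "\<And>s. s \<in> S \<Longrightarrow> finite (K' s)" "psd_mat n H"
      using I K H(1)[OF i0] by (auto simp: S_def K'_def split: option.split)
    show "\<And>s k. s \<in> S \<Longrightarrow> k \<in> K' s \<Longrightarrow> dim_vec (w' s k) = n"
      using u w by (auto simp: S_def K'_def w'_def)
    show "cinner (w' s k) (w' t l) = 0" if "s \<in> S" "t \<in> S" "s \<noteq> t" "k \<in> K' s" "l \<in> K' t" for s t k l
    proof (cases s; cases t)
    qed (use that wu ww w u cinner_commute[of "w _ _" u] in \<open>auto simp: S_def K'_def w'_def\<close>)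
    show "psd_mat n (H - ketbra_sum n (K' s) (w' s))" if "s \<in> S" for s
      using that H i0 by (auto simp: S_def A')
  qed
  moreover have "(\<Sum>s\<in>S. Re (mtrace (ketbra_sum n (K' s) (w' s))))
      = Re (cinner u u) + (\<Sum>i\<in>I. Re (mtrace (?A i)))"
    using I(1) by (simp add: S_def A' sum.reindex mtrace_ketbra)
  ultimately show ?thesis by simp
qed

section \<open>Channels and their adjoints\<close>

lemma quantum_channel_carrier:
  "quantum_channel d \<Phi> \<Longrightarrow> A \<in> carrier_mat d d \<Longrightarrow> \<Phi> A \<in> carrier_mat d d"
  by (simp add: quantum_channel_def)

lemma quantum_channel_trace: "quantum_channel d \<Phi> \<Longrightarrow> A \<in> carrier_mat d d \<Longrightarrow> mtrace (\<Phi> A) = mtrace A"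
  by (simp add: quantum_channel_def)

lemma quantum_channel_psd:
  assumes \<Phi>: "quantum_channel d \<Phi>" and X: "psd_mat d X"
  shows "psd_mat d (\<Phi> X)"
proof -
  have Xc: "X \<in> carrier_mat d d" using psd_mat_carrier[OF X] .
  have "ampl d 1 \<Phi> X = \<Phi> X"
  proof -
    have "mat d d (\<lambda>(i, j). X $$ (i, j)) = X" using Xc by (intro eq_matI) auto
    then show ?thesis
      using quantum_channel_carrier[OF \<Phi> Xc] by (intro eq_matI) (auto simp: ampl_def)
  qed
  moreover have "\<forall>n X. psd_mat (d * n) X \<longrightarrow> psd_mat (d * n) (ampl d n \<Phi> X)"
    using \<Phi> by (simp add: quantum_channel_def)
  ultimately show ?thesis using X by (metis mult_1_right)
qed

lemma quantum_channel_sum: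
  assumes \<Phi>: "quantum_channel d \<Phi>" and S: "finite S" and M: "\<And>s. s \<in> S \<Longrightarrow> M s \<in> carrier_mat d d"
  shows "\<Phi> (mat d d (\<lambda>ij. \<Sum>s\<in>S. c s * M s $$ ij)) = mat d d (\<lambda>ij. \<Sum>s\<in>S. c s * \<Phi> (M s) $$ ij)"
  using S M
proof (induction S rule: finite_induct)
  case empty
  have "\<Phi> (0 \<cdot>\<^sub>m 0\<^sub>m d d) = 0 \<cdot>\<^sub>m \<Phi> (0\<^sub>m d d)"
    using \<Phi> zero_carrier_mat unfolding quantum_channel_def by blast
  moreover have "0 \<cdot>\<^sub>m \<Phi> (0\<^sub>m d d) = 0\<^sub>m d d"
    using quantum_channel_carrier[OF \<Phi> zero_carrier_mat] by (intro eq_matI) auto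
  ultimately have "\<Phi> (0\<^sub>m d d) = 0\<^sub>m d d" by simp
  moreover have "mat d d (\<lambda>ij. \<Sum>s\<in>{}. f s ij) = 0\<^sub>m d d" for f :: "'a \<Rightarrow> nat \<times> nat \<Rightarrow> complex"
    by (intro eq_matI) auto
  ultimately show ?case by simp
next
  case (insert x S)
  have Mx: "M x \<in> carrier_mat d d" using insert by simp
  have "mat d d (\<lambda>ij. \<Sum>s\<in>insert x S. c s * M s $$ ij)
      = c x \<cdot>\<^sub>m M x + mat d d (\<lambda>ij. \<Sum>s\<in>S. c s * M s $$ ij)"
    using insert.hyps carrier_matD[OF Mx] by (intro eq_matI) auto
  then have "\<Phi> (mat d d (\<lambda>ij. \<Sum>s\<in>insert x S. c s * M s $$ ij))
      = c x \<cdot>\<^sub>m \<Phi> (M x) + mat d d (\<lambda>ij. \<Sum>s\<in>S. c s * \<Phi> (M s) $$ ij)"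
    using \<Phi> Mx insert by (simp add: quantum_channel_def)
  also have "\<dots> = mat d d (\<lambda>ij. \<Sum>s\<in>insert x S. c s * \<Phi> (M s) $$ ij)"
    using insert quantum_channel_carrier[OF \<Phi> Mx] by (intro eq_matI) auto
  finally show ?case .
qed

lemma ketbra_eq_sum_unit_mat:
  assumes "dim_vec x = d"
  shows "ketbra x = mat d d (\<lambda>ij. \<Sum>s\<in>{..<d} \<times> {..<d}.
    (x $ fst s * cnj (x $ snd s)) * unit_mat_ij d (fst s) (snd s) $$ ij)" (is "_ = ?M")
proof (rule eq_matI)
  fix i j assume "i < dim_row ?M" "j < dim_col ?M"
  then have ij: "i < d" "j < d" by auto
  have "(\<Sum>s\<in>{..<d} \<times> {..<d}.
        (x $ fst s * cnj (x $ snd s)) * unit_mat_ij d (fst s) (snd s) $$ (i, j))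
      = (\<Sum>s\<in>{..<d} \<times> {..<d}. if s = (i, j) then x $ i * cnj (x $ j) else 0)"
    using ij by (intro sum.cong refl) (auto simp: unit_mat_ij_def)
  then show "ketbra x $$ (i, j) = ?M $$ (i, j)" using ij assms by (simp add: ketbra_def)
qed (auto simp: ketbra_def assms)

lemma hs_inner_ketbra:
  assumes "dim_vec e = d" "M \<in> carrier_mat d d"
  shows "hs_inner (ketbra e) M = cinner e (M *\<^sub>v e)"
proof -
  have "hs_inner (ketbra e) M = (\<Sum>i<d. \<Sum>j<d. cnj (e $ j) * e $ i * M $$ (j, i))"
    using assms
    by (simp add: hs_inner_def mtrace_def mat_adj_def ketbra_def scalar_prod_def atLeast0LessThan)
  also have "\<dots> = cinner e (M *\<^sub>v e)"
    using assms by (subst sum.swap) (simp add: quad_form_expand mult_ac)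
  finally show ?thesis .
qed

lemma chan_adj_ketbra_index:
  assumes "quantum_channel d \<Phi>" "dim_vec e = d" "a < d" "b < d"
  shows "chan_adj d \<Phi> (ketbra e) $$ (a, b) = cnj (cinner e (\<Phi> (unit_mat_ij d a b) *\<^sub>v e))"
  using assms by (simp add: chan_adj_def hs_inner_ketbra quantum_channel_carrier unit_mat_ij_def)

text \<open>\<open>\<langle>x, \<Phi>\<^sup>*(|e\<rangle>\<langle>e|) x\<rangle>\<close> is the conjugate of \<open>\<langle>e, \<Phi>(|x\<rangle>\<langle>x|) e\<rangle>\<close>, which is
  nonnegative because \<open>\<Phi>\<close> is positive.\<close>
lemma chan_adj_ketbra_psd:
  assumes \<Phi>: "quantum_channel d \<Phi>" and e: "dim_vec e = d"
  shows "psd_mat d (chan_adj d \<Phi> (ketbra e))"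
  unfolding psd_mat_def
proof (intro conjI ballI)
  show "chan_adj d \<Phi> (ketbra e) \<in> carrier_mat d d" by (simp add: chan_adj_def)
  fix x :: "complex vec" assume "x \<in> carrier_vec d"
  then have x: "dim_vec x = d" by simp
  let ?S = "{..<d} \<times> {..<d}"
  let ?E = "\<lambda>s. unit_mat_ij d (fst s) (snd s)"
  have E: "\<And>s. ?E s \<in> carrier_mat d d" by (simp add: unit_mat_ij_def)
  have "cinner x (chan_adj d \<Phi> (ketbra e) *\<^sub>v x)
      = (\<Sum>a<d. \<Sum>b<d. cnj (x $ a * cnj (x $ b) * cinner e (\<Phi> (unit_mat_ij d a b) *\<^sub>v e)))"
    using \<Phi> e by (subst quad_form_expand[OF _ x]) (simp_all add: chan_adj_def[of d \<Phi> "ketbra e"]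
      chan_adj_ketbra_index[symmetric] mult_ac)
  also have "\<dots> = cnj (\<Sum>s\<in>?S. (x $ fst s * cnj (x $ snd s)) * cinner e (\<Phi> (?E s) *\<^sub>v e))"
    by (simp add: cnj_sum sum.cartesian_product case_prod_beta)
  also have "(\<Sum>s\<in>?S. (x $ fst s * cnj (x $ snd s)) * cinner e (\<Phi> (?E s) *\<^sub>v e))
      = cinner e (\<Phi> (ketbra x) *\<^sub>v e)"
    using quantum_channel_carrier[OF \<Phi> E] e x
    by (simp add: quad_form_sum quantum_channel_sum[OF \<Phi> _ E] ketbra_eq_sum_unit_mat)
  finally have eq: "cinner x (chan_adj d \<Phi> (ketbra e) *\<^sub>v x) = cnj (cinner e (\<Phi> (ketbra x) *\<^sub>v e))" .
  have "psd_mat d (ketbra x)" using ketbra_psd[of x] x by simp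
  then have "psd_mat d (\<Phi> (ketbra x))" by (rule quantum_channel_psd[OF \<Phi>])
  from psd_matD[OF this e]
  show "cinner x (chan_adj d \<Phi> (ketbra e) *\<^sub>v x) \<in> \<real>"
    and "0 \<le> Re (cinner x (chan_adj d \<Phi> (ketbra e) *\<^sub>v x))"
    unfolding eq by (auto simp: complex_is_Real_iff)
qed

lemma onb_dim: "onb d e \<Longrightarrow> k < d \<Longrightarrow> dim_vec (e k) = d"
  by (simp add: onb_def)

text \<open>A square matrix with orthonormal columns also has orthonormal rows.\<close>
lemma onb_complete:
  assumes e: "onb d e" and ij: "i < d" "j < d"
  shows "(\<Sum>k<d. e k $ i * cnj (e k $ j)) = (if i = j then 1 else 0)"
proof -
  define E where "E = mat d d (\<lambda>(i, k). e k $ i)"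
  have E: "E \<in> carrier_mat d d" "mat_adj E \<in> carrier_mat d d" by (simp_all add: E_def mat_adj_def)
  have "mat_adj E * E = 1\<^sub>m d"
  proof (rule eq_matI)
    fix k l assume "k < dim_row (1\<^sub>m d :: complex mat)" "l < dim_col (1\<^sub>m d :: complex mat)"
    then have kl: "k < d" "l < d" by auto
    then have "(mat_adj E * E) $$ (k, l) = cinner (e k) (e l)"
      using e by (simp add: E_def mat_adj_def scalar_prod_def atLeast0LessThan cinner_def onb_dim)
    then show "(mat_adj E * E) $$ (k, l) = 1\<^sub>m d $$ (k, l)" using e kl by (simp add: onb_def)
  qed (use E in auto)
  then have "E * mat_adj E = 1\<^sub>m d" by (rule mat_mult_left_right_inverse[OF E(2,1)])
  moreover have "(E * mat_adj E) $$ (i, j) = (\<Sum>k<d. e k $ i * cnj (e k $ j))"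
    using ij E by (simp add: E_def mat_adj_def scalar_prod_def atLeast0LessThan)
  ultimately show ?thesis using ij by simp
qed

lemma onb_trace:
  assumes e: "onb d e" and M: "M \<in> carrier_mat d d"
  shows "(\<Sum>k<d. cinner (e k) (M *\<^sub>v e k)) = mtrace M"
proof -
  have "(\<Sum>k<d. cinner (e k) (M *\<^sub>v e k))
      = (\<Sum>k<d. \<Sum>i<d. \<Sum>j<d. M $$ (i, j) * (e k $ j * cnj (e k $ i)))"
    using e by (intro sum.cong refl) (simp add: quad_form_expand[OF M] onb_dim mult_ac)
  also have "\<dots> = (\<Sum>i<d. \<Sum>j<d. M $$ (i, j) * (\<Sum>k<d. e k $ j * cnj (e k $ i)))"
    by (subst sum_swap3) (simp add: sum_distrib_left)
  also have "\<dots> = (\<Sum>i<d. \<Sum>j<d. if j = i then M $$ (i, j) else 0)"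
    by (intro sum.cong refl) (simp add: onb_complete[OF e])
  also have "\<dots> = mtrace M"
    using M by (simp add: mtrace_def)
  finally show ?thesis .
qed

definition chan_effect ::
    "nat \<Rightarrow> (complex mat \<Rightarrow> complex mat) \<Rightarrow> (nat \<Rightarrow> complex vec) \<Rightarrow> nat \<Rightarrow> complex mat" where
  "chan_effect d \<Phi> e k = chan_adj d \<Phi> (ketbra (e k))"

lemma chan_effect_carrier [simp]: "chan_effect d \<Phi> e k \<in> carrier_mat d d"
  by (simp add: chan_effect_def chan_adj_def)

lemma chan_effect_psd: "quantum_channel d \<Phi> \<Longrightarrow> onb d e \<Longrightarrow> k < d \<Longrightarrow> psd_mat d (chan_effect d \<Phi> e k)"
  unfolding chan_effect_def by (rule chan_adj_ketbra_psd) (simp_all add: onb_dim)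

text \<open>The effects form a POVM: \<open>\<Sum>\<^sub>k \<Phi>\<^sup>*(|e\<^sub>k\<rangle>\<langle>e\<^sub>k|) = \<Phi>\<^sup>*(I) = I\<close>, since \<open>\<Phi>\<close> is trace preserving.\<close>
lemma chan_effect_sum:
  assumes \<Phi>: "quantum_channel d \<Phi>" and e: "onb d e" and ab: "a < d" "b < d"
  shows "(\<Sum>k<d. chan_effect d \<Phi> e k $$ (a, b)) = (if a = b then 1 else 0)"
proof -
  have U: "unit_mat_ij d a b \<in> carrier_mat d d" by (simp add: unit_mat_ij_def)
  have "(\<Sum>k<d. chan_effect d \<Phi> e k $$ (a, b))
      = cnj (\<Sum>k<d. cinner (e k) (\<Phi> (unit_mat_ij d a b) *\<^sub>v e k))"
    using \<Phi> e ab by (simp add: chan_effect_def chan_adj_ketbra_index onb_dim cnj_sum)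
  also have "\<dots> = cnj (mtrace (unit_mat_ij d a b))"
    by (simp add: onb_trace[OF e quantum_channel_carrier[OF \<Phi> U]] quantum_channel_trace[OF \<Phi> U])
  also have "\<dots> = (if a = b then 1 else 0)"
    using ab by (auto simp: mtrace_def unit_mat_ij_def sum.If_cases)
  finally show ?thesis .
qed

lemma chan_effect_trace:
  assumes \<Phi>: "quantum_channel d \<Phi>" and e: "onb d e"
  shows "(\<Sum>k<d. mtrace (chan_effect d \<Phi> e k)) = of_nat d"
proof -
  have "(\<Sum>k<d. mtrace (chan_effect d \<Phi> e k)) = (\<Sum>k<d. \<Sum>i<d. chan_effect d \<Phi> e k $$ (i, i))"
    by (simp add: mtrace_def carrier_matD[OF chan_effect_carrier])
  also have "\<dots> = (\<Sum>i<d. \<Sum>k<d. chan_effect d \<Phi> e k $$ (i, i))"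
    by (rule sum.swap)
  also have "\<dots> = of_nat d"
    by (simp add: chan_effect_sum[OF \<Phi> e])
  finally show ?thesis .
qed

lemma chan_effect_trace_real:
  assumes "quantum_channel d \<Phi>" "onb d e" "k < d"
  shows "mtrace (chan_effect d \<Phi> e k) = of_real (Re (mtrace (chan_effect d \<Phi> e k)))"
    "0 \<le> Re (mtrace (chan_effect d \<Phi> e k))"
  using psd_mat_trace[OF chan_effect_psd[OF assms]] by simp_all

section \<open>Decomposition of the matrix G\<close>

lemma sum_lessThan_mult: "(\<Sum>a<m * n. f a) = (\<Sum>i<m. \<Sum>j<n. f (i * n + j :: nat))"
proof -
  have "(\<Sum>a\<in>{i * n..<i * n + n}. f a) = (\<Sum>j<n. f (i * n + j))" for i
    using sum.shift_bounds_nat_ivl[of f 0 "i * n" n] by (simp add: add.commute atLeast0LessThan)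
  then show ?thesis by (simp add: sum.nat_group[of f n m, symmetric])
qed

lemma div_mod_less_square: "a < d * d \<Longrightarrow> a div d < (d::nat) \<and> a mod d < d"
  by (cases "d = 0") (auto simp: div_less_iff_less_mult)

lemma vecX_dim [simp]: "dim_vec (vecX d X) = d * d"
  by (simp add: vecX_def)

lemma vecX_index: "a < d * d \<Longrightarrow> vecX d X $ a = X $$ (a div d, a mod d)"
  by (simp add: vecX_def)

lemma cinner_vecX_one:
  assumes "X \<in> carrier_mat d d"
  shows "cinner (vecX d X) (vecX d (1\<^sub>m d)) = cnj (mtrace X)"
proof -
  have "i * d + j < d * d" if "i < d" "j < d" for i j :: nat
  proof -
    have "i * d + j < (i + 1) * d" using that by simp
    also have "\<dots> \<le> d * d" using that by (intro mult_right_mono) auto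
    finally show ?thesis .
  qed
  then have "cinner (vecX d X) (vecX d (1\<^sub>m d))
      = (\<Sum>i<d. \<Sum>j<d. if i = j then cnj (X $$ (i, j)) else 0)"
    by (simp add: cinner_def sum_lessThan_mult, intro sum.cong refl)
      (simp add: vecX_index if_distrib[of "\<lambda>x. _ * x"] cong: if_cong)
  also have "\<dots> = cnj (mtrace X)" using assms by (simp add: mtrace_def cnj_sum)
  finally show ?thesis .
qed

definition max_ent_vec :: "nat \<Rightarrow> complex vec" where
  "max_ent_vec d = (1 / of_real (sqrt (real d))) \<cdot>\<^sub>v vecX d (1\<^sub>m d)"

text \<open>\<open>G\<^sub>\<Phi>\<^sub>,\<^sub>e = \<Sum>\<^sub>k |a\<^sub>k\<rangle>\<langle>a\<^sub>k|\<close> with \<open>a\<^sub>k = |P\<^sub>k\<rangle> / \<surd>(tr P\<^sub>k)\<close> and \<open>P\<^sub>k = \<Phi>\<^sup>*(|e\<^sub>k\<rangle>\<langle>e\<^sub>k|)\<close>; when \<open>tr P\<^sub>k = 0\<close>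
  the junk value \<open>1 / 0 = 0\<close> makes \<open>a\<^sub>k = 0\<close>, matching the omitted term.\<close>
definition effect_vec ::
    "nat \<Rightarrow> (complex mat \<Rightarrow> complex mat) \<Rightarrow> (nat \<Rightarrow> complex vec) \<Rightarrow> nat \<Rightarrow> complex vec" where
  "effect_vec d \<Phi> e k =
     (1 / of_real (sqrt (Re (mtrace (chan_effect d \<Phi> e k))))) \<cdot>\<^sub>v vecX d (chan_effect d \<Phi> e k)"

definition effect_weight ::
    "nat \<Rightarrow> (complex mat \<Rightarrow> complex mat) \<Rightarrow> (nat \<Rightarrow> complex vec) \<Rightarrow> nat \<Rightarrow> real" where
  "effect_weight d \<Phi> e k = sqrt (Re (mtrace (chan_effect d \<Phi> e k)) / real d)"

definition perp_vec ::
    "nat \<Rightarrow> (complex mat \<Rightarrow> complex mat) \<Rightarrow> (nat \<Rightarrow> complex vec) \<Rightarrow> nat \<Rightarrow> complex vec" where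
  "perp_vec d \<Phi> e k = effect_vec d \<Phi> e k - of_real (effect_weight d \<Phi> e k) \<cdot>\<^sub>v max_ent_vec d"

lemma max_ent_vec_dim [simp]: "dim_vec (max_ent_vec d) = d * d"
  by (simp add: max_ent_vec_def)

lemma effect_vec_dim [simp]: "dim_vec (effect_vec d \<Phi> e k) = d * d"
  by (simp add: effect_vec_def)

lemma perp_vec_dim [simp]: "dim_vec (perp_vec d \<Phi> e k) = d * d"
  by (simp add: perp_vec_def)

lemma Gmat_eq_ketbra_sum:
  assumes \<Phi>: "quantum_channel d \<Phi>" and e: "onb d e"
  shows "Gmat d \<Phi> e = ketbra_sum (d * d) {..<d} (effect_vec d \<Phi> e)"
proof (rule eq_matI)
  fix a b assume "a < dim_row (ketbra_sum (d * d) {..<d} (effect_vec d \<Phi> e))"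
    "b < dim_col (ketbra_sum (d * d) {..<d} (effect_vec d \<Phi> e))"
  then have ab: "a < d * d" "b < d * d" by auto
  have "(let P = chan_effect d \<Phi> e k in
          if mtrace P = 0 then 0 else ketbra (vecX d P) $$ (a, b) / mtrace P)
      = effect_vec d \<Phi> e k $ a * cnj (effect_vec d \<Phi> e k $ b)" if k: "k < d" for k
  proof -
    define t where "t = mtrace (chan_effect d \<Phi> e k)"
    define r where "r = Re t"
    have t: "t = of_real r" "0 \<le> r"
      using chan_effect_trace_real[OF \<Phi> e k] by (simp_all add: t_def r_def)
    have sq: "complex_of_real (sqrt r) * complex_of_real (sqrt r) = t"
      using t by (simp flip: of_real_mult)
    show ?thesis
    proof (cases "r = 0")
      case True
      then show ?thesis
        using t ab by (simp add: Let_def effect_vec_def t_def[symmetric] r_def[symmetric])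
    next
      case False
      then have "t \<noteq> 0" using t by simp
      then show ?thesis
        using ab by (simp add: Let_def ketbra_def effect_vec_def t_def[symmetric] r_def[symmetric]
            abs_of_nonneg[OF t(2)] flip: sq)
    qed
  qed
  then show "Gmat d \<Phi> e $$ (a, b) = ketbra_sum (d * d) {..<d} (effect_vec d \<Phi> e) $$ (a, b)"
    using ab by (simp add: Gmat_def chan_effect_def[symmetric])
qed (simp_all add: Gmat_def)

lemma omega_eq_ketbra:
  assumes "d \<ge> 1"
  shows "omega d = ketbra (max_ent_vec d)"
proof (rule eq_matI)
  fix a b assume "a < dim_row (ketbra (max_ent_vec d))" "b < dim_col (ketbra (max_ent_vec d))"
  then have ab: "a < d * d" "b < d * d" by (auto simp: ketbra_def)
  have "complex_of_real (sqrt (real d)) * complex_of_real (sqrt (real d)) = of_nat d"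
    by (simp flip: of_real_mult)
  then show "omega d $$ (a, b) = ketbra (max_ent_vec d) $$ (a, b)"
    using ab div_mod_less_square[OF ab(1)] div_mod_less_square[OF ab(2)]
    by (simp add: omega_def ketbra_def max_ent_vec_def vecX_index)
qed (simp_all add: omega_def ketbra_def)

lemma cinner_max_ent_vec:
  assumes "d \<ge> 1"
  shows "cinner (max_ent_vec d) (max_ent_vec d) = 1"
proof -
  have "complex_of_real (sqrt (real d)) * complex_of_real (sqrt (real d)) = of_nat d"
    by (simp flip: of_real_mult)
  moreover have "mtrace (1\<^sub>m d :: complex mat) = of_nat d" by (simp add: mtrace_def)
  ultimately show ?thesis
    using assms by (simp add: max_ent_vec_def cinner_smult_left cinner_smult_right cinner_vecX_one)
qed

lemma cinner_effect_vec_max_ent_vec: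
  assumes \<Phi>: "quantum_channel d \<Phi>" and e: "onb d e" and k: "k < d"
  shows "cinner (effect_vec d \<Phi> e k) (max_ent_vec d) = of_real (effect_weight d \<Phi> e k)"
proof -
  define r where "r = Re (mtrace (chan_effect d \<Phi> e k))"
  have t: "mtrace (chan_effect d \<Phi> e k) = of_real r" "0 \<le> r"
    using chan_effect_trace_real[OF \<Phi> e k] by (simp_all add: r_def)
  have "r / (sqrt (real d) * sqrt r) = sqrt (r / real d)"
  proof (cases "r = 0")
    case False
    have "r / (sqrt (real d) * sqrt r) = sqrt r * sqrt r / (sqrt (real d) * sqrt r)"
      using t(2) by simp
    also have "\<dots> = sqrt r / sqrt (real d)"
      using False t(2) by (intro mult_divide_mult_cancel_right) simp
    finally show ?thesis by (simp add: real_sqrt_divide)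
  qed simp
  then show ?thesis
    by (simp add: effect_vec_def max_ent_vec_def effect_weight_def cinner_smult_left
        cinner_smult_right cinner_vecX_one t r_def[symmetric] flip: of_real_mult of_real_divide)
qed

lemma perp_vec_orth:
  assumes "quantum_channel d \<Phi>" "onb d e" "k < d"
  shows "cinner (perp_vec d \<Phi> e k) (max_ent_vec d) = 0"
  using assms by (simp add: perp_vec_def cinner_diff_left cinner_smult_left cinner_max_ent_vec
      cinner_effect_vec_max_ent_vec)

lemma effect_weight_sum:
  assumes \<Phi>: "quantum_channel d \<Phi>" and e: "onb d e" and d: "d \<ge> 1"
  shows "(\<Sum>k<d. (effect_weight d \<Phi> e k)\<^sup>2) = 1"
proof -
  have "(effect_weight d \<Phi> e k)\<^sup>2 = Re (mtrace (chan_effect d \<Phi> e k)) / real d" if "k < d" for k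
    using chan_effect_trace_real(2)[OF \<Phi> e that] by (simp add: effect_weight_def)
  then have "(\<Sum>k<d. (effect_weight d \<Phi> e k)\<^sup>2) = Re (\<Sum>k<d. mtrace (chan_effect d \<Phi> e k)) / real d"
    by (simp add: sum_divide_distrib)
  also have "\<dots> = 1" using d by (simp add: chan_effect_trace[OF \<Phi> e])
  finally show ?thesis .
qed

text \<open>\<open>\<Sum>\<^sub>k \<surd>(tr P\<^sub>k / d) a\<^sub>k = |\<Sum>\<^sub>k P\<^sub>k\<rangle> / \<surd>d = |I\<rangle> / \<surd>d\<close>; a zero-trace effect contributes
  nothing on either side because it vanishes.\<close>
lemma effect_vec_weighted_sum:
  assumes \<Phi>: "quantum_channel d \<Phi>" and e: "onb d e" and a: "a < d * d"
  shows "(\<Sum>k<d. of_real (effect_weight d \<Phi> e k) * effect_vec d \<Phi> e k $ a) = max_ent_vec d $ a"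
proof -
  have each: "of_real (effect_weight d \<Phi> e k) * effect_vec d \<Phi> e k $ a
      = vecX d (chan_effect d \<Phi> e k) $ a / of_real (sqrt (real d))" if k: "k < d" for k
  proof -
    define r where "r = Re (mtrace (chan_effect d \<Phi> e k))"
    have t: "mtrace (chan_effect d \<Phi> e k) = of_real r" "0 \<le> r"
      using chan_effect_trace_real[OF \<Phi> e k] by (simp_all add: r_def)
    show ?thesis
    proof (cases "r = 0")
      case True
      then have "chan_effect d \<Phi> e k = 0\<^sub>m d d"
        using psd_mat_trace_eq_0[OF chan_effect_psd[OF \<Phi> e k]] t by simp
      then show ?thesis
        using a div_mod_less_square[OF a] by (simp add: vecX_index effect_weight_def mtrace_def)
    next
      case False
      then show ?thesis
        using t(2) a
        by (simp add: effect_weight_def effect_vec_def r_def[symmetric] real_sqrt_divide)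
    qed
  qed
  have "(\<Sum>k<d. vecX d (chan_effect d \<Phi> e k) $ a) = vecX d (1\<^sub>m d) $ a"
    using a div_mod_less_square[OF a] by (simp add: vecX_index chan_effect_sum[OF \<Phi> e])
  then show ?thesis
    using a by (simp add: each max_ent_vec_def sum_divide_distrib[symmetric])
qed

text \<open>Splitting each \<open>a\<^sub>k\<close> into its component along \<open>|I\<rangle>/\<surd>d\<close> and the orthogonal rest.\<close>
lemma Gmat_decomp:
  assumes \<Phi>: "quantum_channel d \<Phi>" and e: "onb d e" and d: "d \<ge> 1"
  shows "Gmat d \<Phi> e = omega d + ketbra_sum (d * d) {..<d} (perp_vec d \<Phi> e)"
proof -
  let ?c = "effect_weight d \<Phi> e" and ?u = "max_ent_vec d"
  have "effect_vec d \<Phi> e = (\<lambda>k. perp_vec d \<Phi> e k + of_real (?c k) \<cdot>\<^sub>v ?u)"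
    by (intro ext eq_vecI) (simp_all add: perp_vec_def)
  then have "Gmat d \<Phi> e = ketbra_sum (d * d) {..<d} (\<lambda>k. perp_vec d \<Phi> e k + of_real (?c k) \<cdot>\<^sub>v ?u)"
    by (simp add: Gmat_eq_ketbra_sum[OF \<Phi> e])
  also have "\<dots> = ketbra ?u + ketbra_sum (d * d) {..<d} (perp_vec d \<Phi> e)"
  proof (rule ketbra_sum_add_smult)
    fix a assume a: "a < d * d"
    have "(\<Sum>k<d. of_real (?c k) * perp_vec d \<Phi> e k $ a)
        = (\<Sum>k<d. of_real (?c k) * effect_vec d \<Phi> e k $ a) - of_real (\<Sum>k<d. (?c k)\<^sup>2) * ?u $ a"
      using a by (simp add: perp_vec_def algebra_simps sum_subtractf sum_distrib_left
          sum_distrib_right power2_eq_square)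
    then show "(\<Sum>k<d. of_real (?c k) * perp_vec d \<Phi> e k $ a) = 0"
      using a by (simp add: effect_vec_weighted_sum[OF \<Phi> e] effect_weight_sum[OF \<Phi> e d])
  qed (simp_all add: effect_weight_sum[OF \<Phi> e d])
  finally show ?thesis by (simp add: omega_eq_ketbra[OF d])
qed

lemma perp_vec_orth_of_hs_inner:
  assumes "quantum_channel d \<Phi>" "onb d e" "quantum_channel d \<Psi>" "onb d e'" "d \<ge> 1"
    and "hs_inner (Gmat d \<Phi> e - omega d) (Gmat d \<Psi> e' - omega d) = 0" "k < d" "l < d"
  shows "cinner (perp_vec d \<Phi> e k) (perp_vec d \<Psi> e' l) = 0"
proof (rule ketbra_sum_hs_inner_eq_0D[of "{..<d}" "{..<d}"])
  have "Gmat d \<Phi> e - omega d = ketbra_sum (d * d) {..<d} (perp_vec d \<Phi> e)"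
    if "quantum_channel d \<Phi>" "onb d e" for \<Phi> e
    using Gmat_decomp[OF that assms(5)] omega_eq_ketbra[OF assms(5)]
    by (auto intro!: eq_matI simp: ketbra_def)
  then show "hs_inner (ketbra_sum (d * d) {..<d} (perp_vec d \<Phi> e))
      (ketbra_sum (d * d) {..<d} (perp_vec d \<Psi> e')) = 0"
    using assms(1-4,6) by simp
qed (use assms(7,8) in auto)

theorem proposition4p9:
  fixes d N :: nat
    and \<Phi> :: "nat \<Rightarrow> complex mat \<Rightarrow> complex mat"
    and e :: "nat \<Rightarrow> nat \<Rightarrow> complex vec"
  assumes "d \<ge> 1" and "N \<ge> 1"
    and "\<And>i. i < N \<Longrightarrow> quantum_channel d (\<Phi> i)"
    and "\<And>i. i < N \<Longrightarrow> onb d (e i)"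
    and "\<And>i j. i < N \<Longrightarrow> j < N \<Longrightarrow> i \<noteq> j \<Longrightarrow>
           hs_inner (Gmat d (\<Phi> i) (e i) - omega d) (Gmat d (\<Phi> j) (e j) - omega d) = 0"
  shows "(\<exists>H. hermitian_mat (d * d) H \<and>
             (\<forall>i<N. loewner_le (d * d) (Gmat d (\<Phi> i) (e i)) H) \<and>
             mtrace H = 1 - of_nat N + (\<Sum>i<N. mtrace (Gmat d (\<Phi> i) (e i))))
       \<and> (\<forall>H. hermitian_mat (d * d) H \<and>
             (\<forall>i<N. loewner_le (d * d) (Gmat d (\<Phi> i) (e i)) H) \<longrightarrow>
             Re (1 - of_nat N + (\<Sum>i<N. mtrace (Gmat d (\<Phi> i) (e i)))) \<le> Re (mtrace H))"
proof -
  let ?u = "max_ent_vec d" and ?w = "\<lambda>i. perp_vec d (\<Phi> i) (e i)"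
  let ?A = "\<lambda>i. ketbra_sum (d * d) {..<d} (?w i)"
  have G: "Gmat d (\<Phi> i) (e i) = ketbra ?u + ?A i" if "i < N" for i
    using Gmat_decomp[OF assms(3,4)[OF that] assms(1)] omega_eq_ketbra[OF assms(1)] by simp
  have orth: "cinner (?w i k) (?w j l) = 0" if "i < N" "j < N" "i \<noteq> j" "k < d" "l < d" for i j k l
    using perp_vec_orth_of_hs_inner[OF assms(3,4)[OF that(1)] assms(3,4)[OF that(2)] assms(1)
        assms(5)[OF that(1-3)] that(4,5)] .
  have trace: "1 - of_nat N + (\<Sum>i<N. mtrace (Gmat d (\<Phi> i) (e i)))
      = cinner ?u ?u + (\<Sum>i<N. mtrace (?A i))"
    using cinner_max_ent_vec[OF assms(1)] ketbra_carrier[of ?u]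
    by (simp add: G mtrace_add mtrace_ketbra sum.distrib)
  have upper: "\<exists>H. hermitian_mat (d * d) H \<and> (\<forall>i\<in>{..<N}. loewner_le (d * d) (ketbra ?u + ?A i) H) \<and>
      mtrace H = cinner ?u ?u + (\<Sum>i<N. mtrace (?A i))"
    by (rule hermitian_upper_bound) auto
  have lower: "Re (cinner ?u ?u) + (\<Sum>i<N. Re (mtrace (?A i))) \<le> Re (mtrace H)"
    if "\<forall>i<N. loewner_le (d * d) (ketbra ?u + ?A i) H" for H
    by (rule trace_ge_of_loewner_le_orthogonal)
      (use that assms(1-4) orth perp_vec_orth in \<open>auto simp: lessThan_empty_iff\<close>)
  have "(\<forall>i<N. loewner_le (d * d) (Gmat d (\<Phi> i) (e i)) H) \<longleftrightarrow>
      (\<forall>i<N. loewner_le (d * d) (ketbra ?u + ?A i) H)" for H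
    using G by auto
  then show ?thesis unfolding trace using upper lower by (auto simp: Re_sum)
qed

end
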